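(* Let $f:[0,1]^n \to \mathbb{R}_+$ be a differentiable DR-submodular function and $\vec{x}^* \in [0,1]^n$ a maximizer of $f$. Consider a differentiable trajectory $(\vec{x}^{(t)},\vec{y}^{(t)})$ with $\vec{x}^{(t)} \le \vec{y}^{(t)}$ that follows the update rule: for every $t$ and every coordinate $i$ with $\nabla_i f(\vec{x}^{(t)}) > 0$ and $\nabla_i f(\vec{y}^{(t)}) < 0$, $$\dot{x}^{(t)}_i = \frac{\nabla_i f(\vec{x}^{(t)})}{\nabla_i f(\vec{x}^{(t)}) - \nabla_i f(\vec{y}^{(t)})}, \qquad \dot{y}^{(t)}_i = \frac{\nabla_i f(\vec{y}^{(t)})}{\nabla_i f(\vec{x}^{(t)}) - \nabla_i f(\vec{y}^{(t)})},$$ and $\dot{x}^{(t)}_i = \dot{y}^{(t)}_i = 0$ for every other coordinate $i$. Let $\vec{p}^{(t)}$ be the projection of $\vec{x}^*$ onto the box $[\vec{x}^{(t)},\vec{y}^{(t)}]$, i.e. $p^{(t)}_i = \min\{\max\{x^*_i, x^{(t)}_i\}, y^{(t)}_i\}$. Then at every time $t$ (where the derivatives exist) $$\frac12\left(\langle \nabla f(\vec{x}^{(t)}), \dot{\vec{x}}^{(t)}\rangle + \langle \nabla f(\vec{y}^{(t)}), \dot{\vec{y}}^{(t)}\rangle\right) + \langle \nabla f(\vec{p}^{(t)}), \dot{\vec{p}}^{(t)}\rangle \ge 0.$$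
   Context: A function $f:[0,1]^n \to \mathbb{R}_+$ is DR-submodular if for all $\vec{x}\le\vec{y}$ in $[0,1]^n$ (coordinate-wise), all $i\in[n]$ and $\delta\in[0,1]$ with $\vec{x}+\delta\vec{1}_{\{i\}}, \vec{y}+\delta\vec{1}_{\{i\}} \in [0,1]^n$, $f(\vec{x}+\delta\vec{1}_{\{i\}})-f(\vec{x}) \ge f(\vec{y}+\delta\vec{1}_{\{i\}})-f(\vec{y})$. For differentiable $f$ this is equivalent to $\nabla f(\vec{x}) \ge \nabla f(\vec{y})$ whenever $\vec{x}\le\vec{y}$. Dots denote time derivatives. *)

theory Defs
  imports "HOL-Analysis.Analysis"
begin

definition dr_submodular :: "(real^'n \<Rightarrow> real) \<Rightarrow> bool" where
  "dr_submodular f \<longleftrightarrow>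
     (\<forall>x y i \<delta>. x \<in> cbox 0 1 \<and> y \<in> cbox 0 1 \<and> x \<le> y \<and> \<delta> \<in> {0..1} \<and>
        x + axis i \<delta> \<in> cbox 0 1 \<and> y + axis i \<delta> \<in> cbox 0 1 \<longrightarrow>
        f (x + axis i \<delta>) - f x \<ge> f (y + axis i \<delta>) - f y)"

definition box_proj :: "real^'n \<Rightarrow> real^'n \<Rightarrow> real^'n \<Rightarrow> real^'n" where
  "box_proj z a b = (\<chi> i. min (max (z $ i) (a $ i)) (b $ i))"

end

theory Submission
  imports Defs
begin

text \<open>
  Differentiability plus DR-submodularity make the gradient antitone on the cube, so with
  \<open>p = box_proj xstar (x t) (y t)\<close> between \<open>x t\<close> and \<open>y t\<close> we get
  \<open>\<nabla>f(y)\<^sub>i \<le> \<nabla>f(p)\<^sub>i \<le> \<nabla>f(x)\<^sub>i\<close>. Clamping is monotone and 1-Lipschitz, so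
  each \<open>p'\<^sub>i\<close> lies between \<open>min(x'\<^sub>i, y'\<^sub>i, 0)\<close> and \<open>max(x'\<^sub>i, y'\<^sub>i, 0)\<close>.
  The claimed sum then is nonnegative coordinate by coordinate, an elementary
  inequality in six reals.
\<close>

lemma has_derivative_difference_quotient_at_right:
  fixes f :: "'a::real_normed_vector \<Rightarrow> real"
  assumes f: "(f has_derivative f') (at z within S)" and "d > 0"
    and segment: "\<forall>\<delta>\<in>{0..d}. z + \<delta> *\<^sub>R v \<in> S"
  shows "((\<lambda>\<delta>. (f (z + \<delta> *\<^sub>R v) - f z) / \<delta>) \<longlongrightarrow> f' v) (at_right 0)"
proof -
  have line: "((\<lambda>\<delta>. z + \<delta> *\<^sub>R v) has_derivative (\<lambda>\<delta>. \<delta> *\<^sub>R v)) (at 0 within {0..d})"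
    by (auto intro!: derivative_eq_intros)
  have "(f has_derivative f') (at z within (\<lambda>\<delta>. z + \<delta> *\<^sub>R v) ` {0..d})"
    using segment by (auto intro: has_derivative_subset[OF f])
  with line have "((\<lambda>\<delta>. f (z + \<delta> *\<^sub>R v)) has_derivative (\<lambda>\<delta>. f' (\<delta> *\<^sub>R v))) (at 0 within {0..d})"
    using has_derivative_in_compose[of _ _ 0] by fastforce
  moreover have "(\<lambda>\<delta>. f' (\<delta> *\<^sub>R v)) = (*) (f' v)"
    using linear_scale[OF has_derivative_linear[OF f]] by (auto simp: mult.commute)
  ultimately have "((\<lambda>\<delta>. f (z + \<delta> *\<^sub>R v)) has_field_derivative f' v) (at 0 within {0..d})"
    by (simp add: has_field_derivative_def)
  then show ?thesis
    using at_within_Icc_at_right[OF \<open>d > 0\<close>] by (simp add: has_field_derivative_iff)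
qed

lemma scaleR_axis: "\<delta> *\<^sub>R axis i (c::real) = axis i (\<delta> * c)"
  by (simp add: vec_eq_iff axis_def)

lemma add_axis_mem_unit_cube:
  fixes z :: "real^'n"
  assumes "z \<in> cbox 0 1"
  shows "z + axis i s \<in> cbox 0 1 \<longleftrightarrow> 0 \<le> z $ i + s \<and> z $ i + s \<le> 1"
  using assms unfolding mem_box_cart by (auto simp: axis_def)

lemma axis_add: "axis i u + axis i v = axis i (u + v :: real)"
  by (simp add: vec_eq_iff axis_def)

lemma unit_cube_partial_difference_quotient:
  fixes f :: "real^'n \<Rightarrow> real"
  assumes f: "(f has_derivative (\<lambda>h. g \<bullet> h)) (at z within cbox 0 1)"
    and z: "z \<in> cbox 0 1" and "d > 0" and "0 \<le> c" "c \<le> 1"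
    and room: "c * d \<le> z $ i" "z $ i + (1 - c) * d \<le> 1"
  shows "((\<lambda>\<delta>. (f (z + axis i ((1 - c) * \<delta>)) - f (z + axis i (- (c * \<delta>)))) / \<delta>) \<longlongrightarrow> g $ i)
           (at_right 0)"
proof -
  have zi: "0 \<le> z $ i" "z $ i \<le> 1"
    using z unfolding mem_box_cart by auto
  have segments: "z + \<delta> *\<^sub>R axis i (1 - c) \<in> cbox 0 1" "z + \<delta> *\<^sub>R axis i (- c) \<in> cbox 0 1"
    if "\<delta> \<in> {0..d}" for \<delta>
  proof -
    have "\<delta> * (1 - c) \<le> d * (1 - c)" "0 \<le> \<delta> * (1 - c)" "\<delta> * c \<le> d * c" "0 \<le> \<delta> * c"
      using that \<open>0 \<le> c\<close> \<open>c \<le> 1\<close> by (auto intro: mult_right_mono)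
    then show "z + \<delta> *\<^sub>R axis i (1 - c) \<in> cbox 0 1" "z + \<delta> *\<^sub>R axis i (- c) \<in> cbox 0 1"
      using zi room that by (auto simp: scaleR_axis add_axis_mem_unit_cube[OF z] mult.commute)
  qed
  have "((\<lambda>\<delta>. (f (z + \<delta> *\<^sub>R axis i (1 - c)) - f z) / \<delta> - (f (z + \<delta> *\<^sub>R axis i (- c)) - f z) / \<delta>)
      \<longlongrightarrow> g \<bullet> axis i (1 - c) - g \<bullet> axis i (- c)) (at_right 0)"
    using f \<open>d > 0\<close> segments
    by (intro tendsto_diff has_derivative_difference_quotient_at_right) auto
  then show ?thesis
    by (simp add: scaleR_axis inner_axis diff_divide_distrib algebra_simps)
qed

text \<open>
  The difference quotients in coordinate \<open>i\<close> are taken over the windows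
  \<open>[a\<^sub>i - ca \<delta>, a\<^sub>i + (1 - ca) \<delta>]\<close> and \<open>[b\<^sub>i - cb \<delta>, b\<^sub>i + (1 - cb) \<delta>]\<close>;
  the shifts keep both windows inside the cube when \<open>a\<close> or \<open>b\<close> lies on its boundary.
\<close>
lemma dr_submodular_gradient_le_shifted:
  fixes f :: "real^'n \<Rightarrow> real"
  assumes diff: "\<forall>z\<in>cbox 0 1. (f has_derivative (\<lambda>h. gradf z \<bullet> h)) (at z within cbox 0 1)"
    and dr: "dr_submodular f"
    and a: "a \<in> cbox 0 1" and b: "b \<in> cbox 0 1" and ab: "a \<le> b" and "d > 0"
    and c: "0 \<le> ca" "ca \<le> cb" "cb \<le> 1"
    and room_a: "ca * d \<le> a $ i" "a $ i + (1 - ca) * d \<le> 1"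
    and room_b: "cb * d \<le> b $ i" "b $ i + (1 - cb) * d \<le> 1"
    and gap: "(cb - ca) * d \<le> b $ i - a $ i"
  shows "gradf b $ i \<le> gradf a $ i"
proof -
  define Q where "Q z c = (\<lambda>\<delta>. (f (z + axis i ((1 - c) * \<delta>)) - f (z + axis i (- (c * \<delta>)))) / \<delta>)"
    for z c
  have Q_tendsto: "(Q z c \<longlongrightarrow> gradf z $ i) (at_right 0)"
    if "z \<in> cbox 0 1" "0 \<le> c" "c \<le> 1" "c * d \<le> z $ i" "z $ i + (1 - c) * d \<le> 1" for z c
    unfolding Q_def using diff that \<open>d > 0\<close> by (intro unit_cube_partial_difference_quotient) auto
  have "\<forall>\<^sub>F \<delta> in at_right 0. 0 < \<delta> \<and> \<delta> < d"
    using \<open>d > 0\<close> by (auto simp: eventually_at_right_field)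
  then have "\<forall>\<^sub>F \<delta> in at_right 0. Q b cb \<delta> \<le> Q a ca \<delta>"
  proof eventually_elim
    case (elim \<delta>)
    then have \<delta>: "0 < \<delta>" "\<delta> < d" by auto
    define a0 b0 where "a0 = a + axis i (- (ca * \<delta>))" and "b0 = b + axis i (- (cb * \<delta>))"
    have "f (a0 + axis i \<delta>) - f a0 \<ge> f (b0 + axis i \<delta>) - f b0"
      using dr unfolding dr_submodular_def
    proof (elim allE impE, intro conjI)
      have scale: "0 \<le> k * \<delta>" "k * \<delta> \<le> k * d" if "0 \<le> k" for k
        using that \<delta> by (auto intro: mult_left_mono)
      have "0 \<le> ca" "0 \<le> cb" "0 \<le> cb - ca" "0 \<le> 1 - ca" "0 \<le> 1 - cb"
        using c by auto
      note scales = this[THEN scale(1)] this[THEN scale(2)]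
      have shift: "z + axis i (- (k * \<delta>)) + axis i \<delta> = z + axis i ((1 - k) * \<delta>)" for z :: "real^'n" and k
        by (simp add: axis_add algebra_simps)
      show "a0 \<in> cbox 0 1" "b0 \<in> cbox 0 1" "a0 + axis i \<delta> \<in> cbox 0 1" "b0 + axis i \<delta> \<in> cbox 0 1"
        using scales c room_a room_b a b unfolding a0_def b0_def shift
        by (auto simp: add_axis_mem_unit_cube[OF a] add_axis_mem_unit_cube[OF b])
      show "\<delta> \<in> {0..1}"
        using \<delta> room_a by (auto simp: algebra_simps)
      show "a0 \<le> b0"
        using ab scales gap by (auto simp: a0_def b0_def less_eq_vec_def axis_def left_diff_distrib)
    qed
    then show ?case
      using \<delta> by (simp add: Q_def a0_def b0_def axis_add algebra_simps divide_right_mono)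
  qed
  with Q_tendsto[OF a] Q_tendsto[OF b] assms show ?thesis
    by (intro tendsto_le[OF trivial_limit_at_right_real]) auto
qed

lemma dr_submodular_gradient_antimono:
  fixes f :: "real^'n \<Rightarrow> real"
  assumes diff: "\<forall>z\<in>cbox 0 1. (f has_derivative (\<lambda>h. gradf z \<bullet> h)) (at z within cbox 0 1)"
    and dr: "dr_submodular f"
    and a: "a \<in> cbox 0 1" and b: "b \<in> cbox 0 1" and ab: "a \<le> b"
  shows "gradf b $ i \<le> gradf a $ i"
proof -
  have "0 \<le> a $ i" "a $ i \<le> b $ i" "b $ i \<le> 1"
    using a b ab by (auto simp: mem_box_cart less_eq_vec_def)
  then consider "b $ i < 1" | "b $ i = 1" "a $ i = 0" | "b $ i = 1" "0 < a $ i"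
    by linarith
  then show ?thesis
  proof cases
    case 1
    with \<open>0 \<le> a $ i\<close> \<open>a $ i \<le> b $ i\<close> show ?thesis
      by (intro dr_submodular_gradient_le_shifted[OF diff dr a b ab, of "1 - b $ i" 0 0]) auto
  next
    case 2
    then show ?thesis
      by (intro dr_submodular_gradient_le_shifted[OF diff dr a b ab, of 1 0 1]) auto
  next
    case 3
    with \<open>a $ i \<le> b $ i\<close> show ?thesis
      by (intro dr_submodular_gradient_le_shifted[OF diff dr a b ab, of "a $ i" 1 1]) auto
  qed
qed

lemma clamp_difference_quotient_bounds:
  fixes c a b a2 b2 h :: real
  assumes "h > 0"
  shows "min (min ((a2 - a) / h) ((b2 - b) / h)) 0 \<le> (min (max c a2) b2 - min (max c a) b) / h"
    and "(min (max c a2) b2 - min (max c a) b) / h \<le> max (max ((a2 - a) / h) ((b2 - b) / h)) 0"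
proof -
  have lo: "min (min (a2 - a) (b2 - b)) 0 \<le> min (max c a2) b2 - min (max c a) b"
    and hi: "min (max c a2) b2 - min (max c a) b \<le> max (max (a2 - a) (b2 - b)) 0"
    by (auto simp: min_def max_def)
  from lo assms show "min (min ((a2 - a) / h) ((b2 - b) / h)) 0 \<le> (min (max c a2) b2 - min (max c a) b) / h"
    by (auto simp: min_le_iff_disj divide_right_mono)
  from hi assms show "(min (max c a2) b2 - min (max c a) b) / h \<le> max (max ((a2 - a) / h) ((b2 - b) / h)) 0"
    by (auto simp: le_max_iff_disj divide_right_mono divide_le_0_iff)
qed

lemma clamp_derivative_bounds:
  fixes u v :: "real \<Rightarrow> real"
  assumes u: "(u has_real_derivative u') (at t)" and v: "(v has_real_derivative v') (at t)"
    and p: "((\<lambda>s. min (max c (u s)) (v s)) has_real_derivative p') (at t)"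
  shows "min (min u' v') 0 \<le> p'" and "p' \<le> max (max u' v') 0"
proof -
  have quotient: "((\<lambda>s. (g s - g t) / (s - t)) \<longlongrightarrow> g') (at_right t)"
    if "(g has_real_derivative g') (at t)" for g g'
    using that unfolding has_field_derivative_iff filterlim_at_split by blast
  note lim_u = quotient[OF u] and lim_v = quotient[OF v] and lim_p = quotient[OF p]
  have right: "\<forall>\<^sub>F s in at_right t. s - t > 0"
    by (simp add: eventually_at_filter)
  show "min (min u' v') 0 \<le> p'"
    by (rule tendsto_le[OF trivial_limit_at_right_real lim_p
          tendsto_min[OF tendsto_min[OF lim_u lim_v] tendsto_const]])
      (use right in eventually_elim, rule clamp_difference_quotient_bounds)
  show "p' \<le> max (max u' v') 0"
    by (rule tendsto_le[OF trivial_limit_at_right_real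
          tendsto_max[OF tendsto_max[OF lim_u lim_v] tendsto_const] lim_p])
      (use right in eventually_elim, rule clamp_difference_quotient_bounds)
qed

lemma mult_ge_of_mem_interval:
  fixes a b g v :: real
  assumes "b \<le> 0" "0 \<le> a" "b \<le> g" "g \<le> a" "b \<le> v" "v \<le> a"
  shows "a * b \<le> g * v"
proof (cases "0 \<le> g")
  case True
  then have "g * v \<ge> g * b" using assms by (intro mult_left_mono) auto
  moreover have "g * b \<ge> a * b" using assms by (intro mult_right_mono_neg) auto
  ultimately show ?thesis by linarith
next
  case False
  then have "g * v \<ge> g * a" using assms by (intro mult_left_mono_neg) auto
  moreover have "g * a \<ge> b * a" using assms by (intro mult_right_mono) auto
  ultimately show ?thesis by (simp add: mult.commute)
qed

lemma update_rule_coordinate_nonneg: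
  fixes A B G X Y P :: real
  assumes rule: "if A > 0 \<and> B < 0 then X = A / (A - B) \<and> Y = B / (A - B) else X = 0 \<and> Y = 0"
    and G: "B \<le> G" "G \<le> A"
    and P: "min (min X Y) 0 \<le> P" "P \<le> max (max X Y) 0"
  shows "0 \<le> 1/2 * (A * X + B * Y) + G * P"
proof (cases "A > 0 \<and> B < 0")
  case True
  define D where "D = A - B"
  have "D > 0" using True by (simp add: D_def)
  have X: "X = A / D" and Y: "Y = B / D"
    using rule True by (auto simp: D_def)
  have "Y < 0" "0 < X"
    using True \<open>D > 0\<close> by (simp_all add: X Y divide_neg_pos)
  with P have "Y \<le> P" "P \<le> X" by auto
  then have "B \<le> P * D" "P * D \<le> A"
    using \<open>D > 0\<close> by (simp_all add: X Y pos_divide_le_eq pos_le_divide_eq)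
  with True G have "A * B \<le> G * (P * D)"
    by (intro mult_ge_of_mem_interval) auto
  have "0 \<le> 1/2 * (A + B)\<^sup>2" by simp
  also have "\<dots> \<le> 1/2 * (A * A + B * B) + G * (P * D)"
    using \<open>A * B \<le> G * (P * D)\<close> by (simp add: power2_eq_square algebra_simps)
  also have "\<dots> = D * (1/2 * (A * X + B * Y) + G * P)"
    using \<open>D > 0\<close> by (simp add: X Y field_simps)
  finally show ?thesis
    using \<open>D > 0\<close> by (simp add: zero_le_mult_iff)
next
  case False
  with rule P show ?thesis by auto
qed

lemma has_vector_derivative_vec_nth:
  "(h has_vector_derivative h') F \<Longrightarrow> ((\<lambda>s. h s $ i) has_real_derivative h' $ i) F"
  unfolding has_real_derivative_iff_has_vector_derivative
  by (rule bounded_linear.has_vector_derivative[OF bounded_linear_vec_nth])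

theorem lemma4:
  fixes f :: "real^'n \<Rightarrow> real"
    and gradf :: "real^'n \<Rightarrow> real^'n"
    and xstar :: "real^'n"
    and T :: "real set"
    and x y x' y' :: "real \<Rightarrow> real^'n"
  assumes nonneg: "\<forall>z\<in>cbox 0 1. f z \<ge> 0"
    and diff: "\<forall>z\<in>cbox 0 1. (f has_derivative (\<lambda>h. gradf z \<bullet> h)) (at z within cbox 0 1)"
    and dr: "dr_submodular f"
    and xstar_in: "xstar \<in> cbox 0 1"
    and xstar_max: "\<forall>z\<in>cbox 0 1. f z \<le> f xstar"
    and T_int: "is_interval T"
    and traj_box: "\<forall>s\<in>T. x s \<in> cbox 0 1 \<and> y s \<in> cbox 0 1"
    and traj_le: "\<forall>s\<in>T. x s \<le> y s"
    and x_deriv: "\<forall>s\<in>T. (x has_vector_derivative x' s) (at s within T)"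
    and y_deriv: "\<forall>s\<in>T. (y has_vector_derivative y' s) (at s within T)"
    and rule: "\<forall>s\<in>T. \<forall>i.
       (if gradf (x s) $ i > 0 \<and> gradf (y s) $ i < 0
        then x' s $ i = gradf (x s) $ i / (gradf (x s) $ i - gradf (y s) $ i)
           \<and> y' s $ i = gradf (y s) $ i / (gradf (x s) $ i - gradf (y s) $ i)
        else x' s $ i = 0 \<and> y' s $ i = 0)"
  shows "\<forall>t\<in>interior T. \<forall>p'.
           ((\<lambda>s. box_proj xstar (x s) (y s)) has_vector_derivative p') (at t) \<longrightarrow>
           (1/2) * (gradf (x t) \<bullet> x' t + gradf (y t) \<bullet> y' t)
             + gradf (box_proj xstar (x t) (y t)) \<bullet> p' \<ge> 0"
proof (intro ballI allI impI)
  fix t p'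
  assume t: "t \<in> interior T"
    and p_deriv: "((\<lambda>s. box_proj xstar (x s) (y s)) has_vector_derivative p') (at t)"
  have "t \<in> T" using t interior_subset by blast
  define p where "p = box_proj xstar (x t) (y t)"
  have xt: "x t \<in> cbox 0 1" and yt: "y t \<in> cbox 0 1" and "x t \<le> y t"
    using traj_box traj_le \<open>t \<in> T\<close> by auto
  then have xp: "x t \<le> p" and py: "p \<le> y t"
    by (auto simp: p_def box_proj_def less_eq_vec_def)
  with xt yt have pt: "p \<in> cbox 0 1"
    unfolding mem_box_cart less_eq_vec_def by (meson order_trans)
  have "(x has_vector_derivative x' t) (at t)" "(y has_vector_derivative y' t) (at t)"
    using x_deriv y_deriv \<open>t \<in> T\<close> at_within_interior[OF t] by metis+
  note x_coord = has_vector_derivative_vec_nth[OF this(1)]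
    and y_coord = has_vector_derivative_vec_nth[OF this(2)]
  have p_coord: "((\<lambda>s. min (max (xstar $ i) (x s $ i)) (y s $ i)) has_real_derivative p' $ i) (at t)" for i
    using has_vector_derivative_vec_nth[OF p_deriv] by (simp add: box_proj_def)
  have "0 \<le> 1/2 * (gradf (x t) $ i * x' t $ i + gradf (y t) $ i * y' t $ i) + gradf p $ i * p' $ i" for i
    using rule \<open>t \<in> T\<close> clamp_derivative_bounds[OF x_coord y_coord p_coord]
      dr_submodular_gradient_antimono[OF diff dr pt yt py]
      dr_submodular_gradient_antimono[OF diff dr xt pt xp]
    by (intro update_rule_coordinate_nonneg) auto
  then have "0 \<le> (\<Sum>i\<in>UNIV. 1/2 * (gradf (x t) $ i * x' t $ i + gradf (y t) $ i * y' t $ i)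
                        + gradf p $ i * p' $ i)"
    by (intro sum_nonneg)
  then show "(1/2) * (gradf (x t) \<bullet> x' t + gradf (y t) \<bullet> y' t)
      + gradf (box_proj xstar (x t) (y t)) \<bullet> p' \<ge> 0"
    by (simp add: p_def inner_vec_def sum.distrib sum_distrib_left flip: sum_divide_distrib)
qed

end
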